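(* Let $\Phi$ be irreducible with highest root $\gamma$ and $\mathfrak h_\gamma=\Phi^+\setminus\{\gamma\}$. Fix $w\in W$ and $\beta\in\Phi^+$. Then there is at most one $v\in W$ such that $v>w$ in Bruhat order, $\beta\in N^\gamma_w\cap N_v$, $\ell_\gamma(w)=\ell_\gamma(v)$, and $v^{-1}\beta=-\gamma$.
   Context: $\Phi$ is a crystallographic root system in a real Euclidean space with base $\Delta$, positive roots $\Phi^+$, $\Phi^-=-\Phi^+$, Weyl group $W$; $s_\alpha$ is the reflection through $\alpha$. $\Phi$ irreducible means it is not a disjoint union of two root systems; then there is a unique highest root $\gamma\in\Phi^+$ with $\alpha\prec\gamma$ for all $\alpha\in\Phi$, where $\alpha\prec\beta$ means $\beta-\alpha$ is a sum of positive roots. For $w\in W$, $N_w=\{\beta\in\Phi^+: w^{-1}\beta\in\Phi^-\}$, $N^\gamma_w=\{\beta\in\Phi^+: w^{-1}\beta\in-\mathfrak h_\gamma\}$, and $\ell_\gamma(w)=|N^\gamma_w|$. Bruhat order $<$ is the transitive closure of the relations $u<s_\alpha u$ for $\alpha\in\Phi^+$ with $(s_\alpha u)^{-1}\alpha\in\Phi^-$. *)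

theory Defs
  imports "HOL-Analysis.Analysis"
begin

definition refl :: "'a::euclidean_space \<Rightarrow> 'a \<Rightarrow> 'a" where
  "refl \<alpha> x = x - ((2 * (x \<bullet> \<alpha>)) / (\<alpha> \<bullet> \<alpha>)) *\<^sub>R \<alpha>"

definition root_system :: "'a::euclidean_space set \<Rightarrow> bool" where
  "root_system \<Phi> \<longleftrightarrow>
     finite \<Phi> \<and> 0 \<notin> \<Phi> \<and> span \<Phi> = UNIV \<and>
     (\<forall>\<alpha>\<in>\<Phi>. \<forall>c::real. c *\<^sub>R \<alpha> \<in> \<Phi> \<longrightarrow> c = 1 \<or> c = -1) \<and>
     (\<forall>\<alpha>\<in>\<Phi>. refl \<alpha> ` \<Phi> = \<Phi>) \<and>
     (\<forall>\<alpha>\<in>\<Phi>. \<forall>\<beta>\<in>\<Phi>. (2 * (\<beta> \<bullet> \<alpha>)) / (\<alpha> \<bullet> \<alpha>) \<in> \<int>)"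

definition irreducible_rs :: "'a::euclidean_space set \<Rightarrow> bool" where
  "irreducible_rs \<Phi> \<longleftrightarrow>
     \<not> (\<exists>\<Phi>1 \<Phi>2. \<Phi>1 \<noteq> {} \<and> \<Phi>2 \<noteq> {} \<and> \<Phi>1 \<union> \<Phi>2 = \<Phi> \<and> \<Phi>1 \<inter> \<Phi>2 = {} \<and>
         (\<forall>\<alpha>\<in>\<Phi>1. \<forall>\<beta>\<in>\<Phi>2. \<alpha> \<bullet> \<beta> = 0))"

definition is_base :: "'a::euclidean_space set \<Rightarrow> 'a set \<Rightarrow> bool" where
  "is_base \<Phi> \<Delta> \<longleftrightarrow> \<Delta> \<subseteq> \<Phi> \<and> independent \<Delta> \<and>
     (\<forall>\<beta>\<in>\<Phi>. \<exists>c::'a \<Rightarrow> int. \<beta> = (\<Sum>\<delta>\<in>\<Delta>. of_int (c \<delta>) *\<^sub>R \<delta>) \<and>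
         ((\<forall>\<delta>\<in>\<Delta>. c \<delta> \<ge> 0) \<or> (\<forall>\<delta>\<in>\<Delta>. c \<delta> \<le> 0)))"

definition pos_roots :: "'a::euclidean_space set \<Rightarrow> 'a set \<Rightarrow> 'a set" where
  "pos_roots \<Phi> \<Delta> = {\<beta>\<in>\<Phi>. \<exists>c::'a \<Rightarrow> int. \<beta> = (\<Sum>\<delta>\<in>\<Delta>. of_int (c \<delta>) *\<^sub>R \<delta>) \<and>
         (\<forall>\<delta>\<in>\<Delta>. c \<delta> \<ge> 0)}"

definition neg_roots :: "'a::euclidean_space set \<Rightarrow> 'a set \<Rightarrow> 'a set" where
  "neg_roots \<Phi> \<Delta> = uminus ` pos_roots \<Phi> \<Delta>"

definition root_prec :: "'a::euclidean_space set \<Rightarrow> 'a set \<Rightarrow> 'a \<Rightarrow> 'a \<Rightarrow> bool" where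
  "root_prec \<Phi> \<Delta> \<alpha> \<beta> \<longleftrightarrow>
     (\<exists>m::'a \<Rightarrow> nat. \<beta> - \<alpha> = (\<Sum>x\<in>pos_roots \<Phi> \<Delta>. of_nat (m x) *\<^sub>R x))"

definition highest_root :: "'a::euclidean_space set \<Rightarrow> 'a set \<Rightarrow> 'a \<Rightarrow> bool" where
  "highest_root \<Phi> \<Delta> \<gamma> \<longleftrightarrow> \<gamma> \<in> pos_roots \<Phi> \<Delta> \<and> (\<forall>\<alpha>\<in>\<Phi>. root_prec \<Phi> \<Delta> \<alpha> \<gamma>)"

inductive_set weyl_group :: "'a::euclidean_space set \<Rightarrow> ('a \<Rightarrow> 'a) set" for \<Phi> where
  weyl_id: "id \<in> weyl_group \<Phi>"
| weyl_step: "w \<in> weyl_group \<Phi> \<Longrightarrow> \<alpha> \<in> \<Phi> \<Longrightarrow> refl \<alpha> \<circ> w \<in> weyl_group \<Phi>"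

definition N_set :: "'a::euclidean_space set \<Rightarrow> 'a set \<Rightarrow> ('a \<Rightarrow> 'a) \<Rightarrow> 'a set" where
  "N_set \<Phi> \<Delta> w = {\<beta>\<in>pos_roots \<Phi> \<Delta>. inv w \<beta> \<in> neg_roots \<Phi> \<Delta>}"

definition h_gamma :: "'a::euclidean_space set \<Rightarrow> 'a set \<Rightarrow> 'a \<Rightarrow> 'a set" where
  "h_gamma \<Phi> \<Delta> \<gamma> = pos_roots \<Phi> \<Delta> - {\<gamma>}"

definition N_gamma :: "'a::euclidean_space set \<Rightarrow> 'a set \<Rightarrow> 'a \<Rightarrow> ('a \<Rightarrow> 'a) \<Rightarrow> 'a set" where
  "N_gamma \<Phi> \<Delta> \<gamma> w = {\<beta>\<in>pos_roots \<Phi> \<Delta>. inv w \<beta> \<in> uminus ` h_gamma \<Phi> \<Delta> \<gamma>}"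

definition ell_gamma :: "'a::euclidean_space set \<Rightarrow> 'a set \<Rightarrow> 'a \<Rightarrow> ('a \<Rightarrow> 'a) \<Rightarrow> nat" where
  "ell_gamma \<Phi> \<Delta> \<gamma> w = card (N_gamma \<Phi> \<Delta> \<gamma> w)"

definition bruhat_step :: "'a::euclidean_space set \<Rightarrow> 'a set \<Rightarrow> ('a \<Rightarrow> 'a) \<Rightarrow> ('a \<Rightarrow> 'a) \<Rightarrow> bool" where
  "bruhat_step \<Phi> \<Delta> u v \<longleftrightarrow> u \<in> weyl_group \<Phi> \<and>
     (\<exists>\<alpha>\<in>pos_roots \<Phi> \<Delta>. v = refl \<alpha> \<circ> u \<and> inv v \<alpha> \<in> neg_roots \<Phi> \<Delta>)"

definition bruhat_less :: "'a::euclidean_space set \<Rightarrow> 'a set \<Rightarrow> ('a \<Rightarrow> 'a) \<Rightarrow> ('a \<Rightarrow> 'a) \<Rightarrow> bool" where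
  "bruhat_less \<Phi> \<Delta> = tranclp (bruhat_step \<Phi> \<Delta>)"

end

theory Submission
  imports Defs
begin

text \<open>Let \<open>\<ell>(u) = |N\<^sub>u|\<close>. A Bruhat step \<open>u < s\<^sub>\<alpha> u\<close> strictly raises \<open>\<ell>\<close>, so a
  Bruhat chain of length at least two raises it by at least two. If \<open>v\<^sup>-\<^sup>1\<beta> = -\<gamma>\<close> with
  \<open>\<beta> \<in> N\<^sub>v\<close>, then \<open>N\<^sup>\<gamma>\<^sub>v = N\<^sub>v - {\<beta>}\<close>, so \<open>\<ell>\<^sub>\<gamma>(w) = \<ell>\<^sub>\<gamma>(v)\<close> forces
  \<open>\<ell>(v) \<le> \<ell>(w) + 1\<close> and hence \<open>v = s\<^sub>\<alpha> w\<close> for a single positive root \<open>\<alpha>\<close>.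
  Then \<open>s\<^sub>\<alpha> \<beta> = -w\<gamma>\<close>, which differs from \<open>\<beta>\<close> because \<open>w\<^sup>-\<^sup>1\<beta> \<noteq> -\<gamma>\<close>; so \<open>\<alpha>\<close> is
  a positive root on the line through \<open>\<beta> + w\<gamma> \<noteq> 0\<close>, and reducedness makes it unique.\<close>

lemma linear_refl: "linear (refl a)"
  unfolding refl_def
  by (rule linearI) (auto simp: inner_add_left algebra_simps add_divide_distrib diff_divide_distrib)

lemma refl_refl: "(a::'a::euclidean_space) \<noteq> 0 \<Longrightarrow> refl a (refl a x) = x"
  unfolding refl_def by (simp add: inner_diff_left algebra_simps field_simps)

lemma refl_self: "refl a a = - a"
  unfolding refl_def by (cases "a = 0") (simp_all add: scaleR_2)

lemma bij_refl: "(a::'a::euclidean_space) \<noteq> 0 \<Longrightarrow> bij (refl a)"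
  by (metis bij_betw_imageI inj_on_inverseI refl_refl surjI)

lemma inv_refl: "(a::'a::euclidean_space) \<noteq> 0 \<Longrightarrow> inv (refl a) = refl a"
  by (rule inv_unique_comp) (auto simp: refl_refl)

definition nonneg_int_comb :: "'a::real_vector set \<Rightarrow> 'a \<Rightarrow> bool" where
  "nonneg_int_comb D x \<longleftrightarrow>
     (\<exists>c::'a \<Rightarrow> int. x = (\<Sum>d\<in>D. of_int (c d) *\<^sub>R d) \<and> (\<forall>d\<in>D. c d \<ge> 0))"

lemma nonneg_int_comb_add:
  assumes "nonneg_int_comb D x" and "nonneg_int_comb D y"
  shows "nonneg_int_comb D (x + y)"
proof -
  obtain a b where "x = (\<Sum>d\<in>D. of_int (a d) *\<^sub>R d)" "y = (\<Sum>d\<in>D. of_int (b d) *\<^sub>R d)"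
    and "\<forall>d\<in>D. a d \<ge> 0" "\<forall>d\<in>D. b d \<ge> 0"
    using assms unfolding nonneg_int_comb_def by blast
  then show ?thesis
    unfolding nonneg_int_comb_def
    by (intro exI[of _ "\<lambda>d. a d + b d"]) (simp add: scaleR_add_left sum.distrib)
qed

lemma nonneg_int_comb_scale:
  assumes "nonneg_int_comb D x" and "m \<ge> 0"
  shows "nonneg_int_comb D (of_int m *\<^sub>R x)"
proof -
  obtain a where "x = (\<Sum>d\<in>D. of_int (a d) *\<^sub>R d)" "\<forall>d\<in>D. a d \<ge> 0"
    using assms(1) unfolding nonneg_int_comb_def by blast
  then show ?thesis
    unfolding nonneg_int_comb_def using assms(2)
    by (intro exI[of _ "\<lambda>d. m * a d"]) (simp add: scaleR_sum_right)
qed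

lemma nonneg_int_comb_antisym:
  assumes "finite D" and "independent D"
    and "nonneg_int_comb D x" and "nonneg_int_comb D (- x)"
  shows "x = 0"
proof -
  obtain a b where a: "x = (\<Sum>d\<in>D. of_int (a d) *\<^sub>R d)" "\<forall>d\<in>D. a d \<ge> 0"
    and b: "- x = (\<Sum>d\<in>D. of_int (b d) *\<^sub>R d)" "\<forall>d\<in>D. b d \<ge> 0"
    using assms(3,4) unfolding nonneg_int_comb_def by blast
  have "(\<Sum>d\<in>D. real_of_int (a d + b d) *\<^sub>R d)
      = (\<Sum>d\<in>D. of_int (a d) *\<^sub>R d) + (\<Sum>d\<in>D. of_int (b d) *\<^sub>R d)"
    by (simp add: scaleR_add_left sum.distrib)
  also have "\<dots> = 0"
    by (simp flip: a(1) b(1))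
  finally have "(\<Sum>d\<in>D. real_of_int (a d + b d) *\<^sub>R d) = 0" .
  then have "real_of_int (a d + b d) = 0" if "d \<in> D" for d
    using independentD[OF assms(2,1) subset_refl] that by simp
  then have "a d = 0" if "d \<in> D" for d
    using that a(2) b(2) by fastforce
  then show ?thesis using a(1) by simp
qed

locale root_system_space =
  fixes \<Phi> :: "'a::euclidean_space set"
  assumes root_system: "root_system \<Phi>"
begin

lemma finite_roots: "finite \<Phi>"
  and zero_not_root: "0 \<notin> \<Phi>"
  and root_multiple: "\<alpha> \<in> \<Phi> \<Longrightarrow> c *\<^sub>R \<alpha> \<in> \<Phi> \<Longrightarrow> c = 1 \<or> c = -1"
  and refl_image_roots: "\<alpha> \<in> \<Phi> \<Longrightarrow> refl \<alpha> ` \<Phi> = \<Phi>"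
  and cartan_integer: "\<alpha> \<in> \<Phi> \<Longrightarrow> \<beta> \<in> \<Phi> \<Longrightarrow> (2 * (\<beta> \<bullet> \<alpha>)) / (\<alpha> \<bullet> \<alpha>) \<in> \<int>"
  using root_system unfolding root_system_def by auto

lemma refl_root: "\<alpha> \<in> \<Phi> \<Longrightarrow> x \<in> \<Phi> \<Longrightarrow> refl \<alpha> x \<in> \<Phi>"
  using refl_image_roots by blast

lemma uminus_root: "x \<in> \<Phi> \<Longrightarrow> - x \<in> \<Phi>"
  using refl_root[of x x] by (simp add: refl_self)

lemma weyl_group_elem:
  assumes "w \<in> weyl_group \<Phi>"
  shows "linear w \<and> bij w \<and> w ` \<Phi> = \<Phi>"
  using assms
proof (induction rule: weyl_group.induct)
  case weyl_id
  then show ?case by (simp add: id_def[symmetric] linear_id)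
next
  case (weyl_step w \<alpha>)
  then have "\<alpha> \<noteq> 0" using zero_not_root by auto
  have "(refl \<alpha> \<circ> w) ` \<Phi> = \<Phi>"
    using weyl_step by (metis image_comp refl_image_roots)
  with weyl_step \<open>\<alpha> \<noteq> 0\<close> show ?case
    using linear_compose[OF _ linear_refl] bij_comp[OF _ bij_refl] by blast
qed

lemma bij_weyl: "w \<in> weyl_group \<Phi> \<Longrightarrow> bij w"
  using weyl_group_elem by blast

lemma linear_inv_weyl: "w \<in> weyl_group \<Phi> \<Longrightarrow> linear (inv w)"
  using weyl_group_elem by (blast intro: inj_linear_imp_inv_linear bij_is_inj)

lemma inv_weyl_root: "w \<in> weyl_group \<Phi> \<Longrightarrow> y \<in> \<Phi> \<Longrightarrow> inv w y \<in> \<Phi>"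
  using weyl_group_elem by (metis bij_is_inj image_iff inv_f_f)

lemma inv_refl_comp:
  "\<alpha> \<in> \<Phi> \<Longrightarrow> w \<in> weyl_group \<Phi> \<Longrightarrow> inv (refl \<alpha> \<circ> w) = inv w \<circ> refl \<alpha>"
  using o_inv_distrib[OF bij_refl bij_weyl] inv_refl zero_not_root by metis

end

locale based_root_system = root_system_space +
  fixes \<Delta> :: "'a::euclidean_space set"
  assumes base: "is_base \<Phi> \<Delta>"
begin

lemma finite_base: "finite \<Delta>" and independent_base: "independent \<Delta>"
  using base finite_roots unfolding is_base_def by (auto intro: finite_subset)

lemma pos_roots_iff: "x \<in> pos_roots \<Phi> \<Delta> \<longleftrightarrow> x \<in> \<Phi> \<and> nonneg_int_comb \<Delta> x"
  unfolding pos_roots_def nonneg_int_comb_def by blast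

lemma neg_roots_iff: "x \<in> neg_roots \<Phi> \<Delta> \<longleftrightarrow> - x \<in> pos_roots \<Phi> \<Delta>"
  unfolding neg_roots_def by (metis image_iff minus_minus)

lemma pos_root_is_root: "x \<in> pos_roots \<Phi> \<Delta> \<Longrightarrow> x \<in> \<Phi>"
  by (simp add: pos_roots_iff)

lemma root_pos_or_neg: "x \<in> \<Phi> \<Longrightarrow> x \<in> pos_roots \<Phi> \<Delta> \<or> x \<in> neg_roots \<Phi> \<Delta>"
proof -
  assume x: "x \<in> \<Phi>"
  then obtain c :: "'a \<Rightarrow> int" where c: "x = (\<Sum>d\<in>\<Delta>. of_int (c d) *\<^sub>R d)"
    and sign: "(\<forall>d\<in>\<Delta>. c d \<ge> 0) \<or> (\<forall>d\<in>\<Delta>. c d \<le> 0)"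
    using base unfolding is_base_def by blast
  have "- x = (\<Sum>d\<in>\<Delta>. of_int (- c d) *\<^sub>R d)"
    unfolding c by (simp add: sum_negf[symmetric])
  with c sign have "nonneg_int_comb \<Delta> x \<or> nonneg_int_comb \<Delta> (- x)"
    unfolding nonneg_int_comb_def by (metis neg_0_le_iff_le)
  with x show ?thesis
    by (auto simp: neg_roots_iff pos_roots_iff uminus_root)
qed

lemma pos_neg_roots_disjoint: "x \<in> pos_roots \<Phi> \<Delta> \<Longrightarrow> x \<notin> neg_roots \<Phi> \<Delta>"
  using nonneg_int_comb_antisym[OF finite_base independent_base, of x] zero_not_root
  by (auto simp: neg_roots_iff pos_roots_iff)

text \<open>If the Cartan integer \<open>m\<close> were negative, \<open>c - m\<alpha>\<close> would be a positive root.\<close>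
lemma refl_pos_root_to_neg:
  assumes "\<alpha> \<in> pos_roots \<Phi> \<Delta>" and "c \<in> pos_roots \<Phi> \<Delta>" and "refl \<alpha> c \<in> neg_roots \<Phi> \<Delta>"
  obtains m :: int where "m \<ge> 0" and "refl \<alpha> c = c - of_int m *\<^sub>R \<alpha>"
proof -
  obtain m where m: "(2 * (c \<bullet> \<alpha>)) / (\<alpha> \<bullet> \<alpha>) = of_int m"
    using cartan_integer assms(1,2) pos_root_is_root by (metis Ints_cases)
  then have refl_c: "refl \<alpha> c = c - of_int m *\<^sub>R \<alpha>"
    unfolding refl_def by simp
  have "m \<ge> 0"
  proof (rule ccontr)
    assume "\<not> m \<ge> 0"
    then have "nonneg_int_comb \<Delta> (c + of_int (- m) *\<^sub>R \<alpha>)"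
      using assms(1,2) by (intro nonneg_int_comb_add nonneg_int_comb_scale) (auto simp: pos_roots_iff)
    moreover have "refl \<alpha> c \<in> \<Phi>"
      using assms(1,2) refl_root pos_root_is_root by blast
    ultimately have "refl \<alpha> c \<in> pos_roots \<Phi> \<Delta>"
      by (simp add: pos_roots_iff refl_c)
    with assms(3) show False using pos_neg_roots_disjoint by blast
  qed
  with refl_c show ?thesis using that by blast
qed

lemma inv_weyl_refl_neg_root:
  assumes u: "u \<in> weyl_group \<Phi>" and \<alpha>: "\<alpha> \<in> pos_roots \<Phi> \<Delta>" "inv u \<alpha> \<in> pos_roots \<Phi> \<Delta>"
    and c: "c \<in> pos_roots \<Phi> \<Delta>" "refl \<alpha> c \<in> neg_roots \<Phi> \<Delta>" "inv u c \<in> neg_roots \<Phi> \<Delta>"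
  shows "inv u (refl \<alpha> c) \<in> neg_roots \<Phi> \<Delta>"
proof -
  obtain m where "m \<ge> 0" and refl_c: "refl \<alpha> c = c - of_int m *\<^sub>R \<alpha>"
    using refl_pos_root_to_neg[OF \<alpha>(1) c(1,2)] .
  have "- inv u (refl \<alpha> c) = - inv u c + of_int m *\<^sub>R inv u \<alpha>"
    unfolding refl_c using linear_inv_weyl[OF u] by (simp add: linear_diff linear_scale)
  moreover have "nonneg_int_comb \<Delta> (- inv u c + of_int m *\<^sub>R inv u \<alpha>)"
    using \<open>m \<ge> 0\<close> \<alpha>(2) c(3)
    by (intro nonneg_int_comb_add nonneg_int_comb_scale) (auto simp: pos_roots_iff neg_roots_iff)
  moreover have "- inv u (refl \<alpha> c) \<in> \<Phi>"
    using u \<alpha>(1) c(1) by (intro uminus_root inv_weyl_root refl_root pos_root_is_root)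
  ultimately show ?thesis
    by (simp add: neg_roots_iff pos_roots_iff)
qed

lemma finite_N_set: "finite (N_set \<Phi> \<Delta> u)"
  unfolding N_set_def using finite_roots pos_root_is_root by (auto intro: finite_subset)

lemma N_set_refl_comp:
  assumes "u \<in> weyl_group \<Phi>" and "\<alpha> \<in> \<Phi>"
  shows "N_set \<Phi> \<Delta> (refl \<alpha> \<circ> u) = {b \<in> pos_roots \<Phi> \<Delta>. inv u (refl \<alpha> b) \<in> neg_roots \<Phi> \<Delta>}"
  unfolding N_set_def inv_refl_comp[OF assms(2,1)] by simp

lemma refl_or_self_mem_N_set_refl_comp:
  assumes u: "u \<in> weyl_group \<Phi>" and \<alpha>: "\<alpha> \<in> pos_roots \<Phi> \<Delta>" "inv u \<alpha> \<in> pos_roots \<Phi> \<Delta>"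
    and c: "c \<in> N_set \<Phi> \<Delta> u"
  shows "(if refl \<alpha> c \<in> pos_roots \<Phi> \<Delta> then refl \<alpha> c else c) \<in> N_set \<Phi> \<Delta> (refl \<alpha> \<circ> u) - {\<alpha>}"
proof -
  have "\<alpha> \<in> \<Phi>" using \<alpha>(1) pos_root_is_root by blast
  then have refl_refl_\<alpha>: "\<And>x. refl \<alpha> (refl \<alpha> x) = x"
    using zero_not_root refl_refl by metis
  have c: "c \<in> pos_roots \<Phi> \<Delta>" "inv u c \<in> neg_roots \<Phi> \<Delta>"
    using c unfolding N_set_def by auto
  show ?thesis
  proof (cases "refl \<alpha> c \<in> pos_roots \<Phi> \<Delta>")
    case True
    moreover have "refl \<alpha> c \<noteq> \<alpha>"
    proof
      assume "refl \<alpha> c = \<alpha>"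
      then have "c = - \<alpha>" using refl_refl_\<alpha>[of c] refl_self[of \<alpha>] by simp
      then show False using c(1) \<alpha>(1) pos_neg_roots_disjoint neg_roots_iff by auto
    qed
    ultimately show ?thesis
      using c(2) by (simp add: N_set_refl_comp[OF u \<open>\<alpha> \<in> \<Phi>\<close>] refl_refl_\<alpha>)
  next
    case False
    then have "refl \<alpha> c \<in> neg_roots \<Phi> \<Delta>"
      using root_pos_or_neg refl_root \<open>\<alpha> \<in> \<Phi>\<close> c(1) pos_root_is_root by blast
    then have "inv u (refl \<alpha> c) \<in> neg_roots \<Phi> \<Delta>"
      using inv_weyl_refl_neg_root[OF u \<alpha> c(1) _ c(2)] by blast
    moreover have "c \<noteq> \<alpha>"
      using c(2) \<alpha>(2) pos_neg_roots_disjoint by blast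
    ultimately show ?thesis
      using False c(1) by (simp add: N_set_refl_comp[OF u \<open>\<alpha> \<in> \<Phi>\<close>])
  qed
qed

lemma card_N_set_refl_less:
  assumes u: "u \<in> weyl_group \<Phi>" and \<alpha>: "\<alpha> \<in> pos_roots \<Phi> \<Delta>" "inv u \<alpha> \<in> pos_roots \<Phi> \<Delta>"
  shows "card (N_set \<Phi> \<Delta> u) < card (N_set \<Phi> \<Delta> (refl \<alpha> \<circ> u))"
proof -
  have "\<alpha> \<in> \<Phi>" using \<alpha>(1) pos_root_is_root by blast
  then have refl_refl_\<alpha>: "\<And>x. refl \<alpha> (refl \<alpha> x) = x"
    using zero_not_root refl_refl by metis
  define N' where "N' = N_set \<Phi> \<Delta> (refl \<alpha> \<circ> u)"
  define g where "g c = (if refl \<alpha> c \<in> pos_roots \<Phi> \<Delta> then refl \<alpha> c else c)" for c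
  have "g ` N_set \<Phi> \<Delta> u \<subseteq> N' - {\<alpha>}"
    using refl_or_self_mem_N_set_refl_comp[OF u \<alpha>] unfolding N'_def g_def by (rule image_subsetI)
  moreover have "inj_on g (N_set \<Phi> \<Delta> u)"
    by (rule inj_onI)
      (auto simp: g_def N_set_def refl_refl_\<alpha> split: if_splits dest: arg_cong[of _ _ "refl \<alpha>"])
  moreover have "\<alpha> \<in> N'"
    using \<alpha> linear_inv_weyl[OF u]
    by (simp add: N'_def N_set_refl_comp[OF u \<open>\<alpha> \<in> \<Phi>\<close>] refl_self linear_neg neg_roots_iff)
  ultimately have "card (N_set \<Phi> \<Delta> u) < card N'"
    using finite_N_set[of "refl \<alpha> \<circ> u"] unfolding N'_def[symmetric]
    by (metis card_Diff1_less card_image card_mono finite_Diff order_le_less_trans)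
  then show ?thesis unfolding N'_def .
qed

lemma bruhat_step_card_less:
  assumes "bruhat_step \<Phi> \<Delta> u v"
  shows "card (N_set \<Phi> \<Delta> u) < card (N_set \<Phi> \<Delta> v)"
proof -
  obtain \<alpha> where u: "u \<in> weyl_group \<Phi>" and \<alpha>: "\<alpha> \<in> pos_roots \<Phi> \<Delta>"
    and v: "v = refl \<alpha> \<circ> u" and "inv v \<alpha> \<in> neg_roots \<Phi> \<Delta>"
    using assms unfolding bruhat_step_def by blast
  moreover have "inv v \<alpha> = - inv u \<alpha>"
    using \<alpha> u linear_inv_weyl[OF u]
    by (simp add: v inv_refl_comp pos_root_is_root refl_self linear_neg)
  ultimately have "inv u \<alpha> \<in> pos_roots \<Phi> \<Delta>"
    by (simp add: neg_roots_iff)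
  then show ?thesis
    using card_N_set_refl_less[OF u \<alpha>] v by simp
qed

lemma bruhat_less_step_or_card_gap:
  assumes "bruhat_less \<Phi> \<Delta> u v"
  shows "bruhat_step \<Phi> \<Delta> u v \<or> card (N_set \<Phi> \<Delta> u) + 2 \<le> card (N_set \<Phi> \<Delta> v)"
proof -
  have "card (N_set \<Phi> \<Delta> u) < card (N_set \<Phi> \<Delta> v) \<and>
    (bruhat_step \<Phi> \<Delta> u v \<or> card (N_set \<Phi> \<Delta> u) + 2 \<le> card (N_set \<Phi> \<Delta> v))"
    using assms unfolding bruhat_less_def
  proof (induction rule: tranclp.induct)
    case (r_into_trancl u v)
    then show ?case using bruhat_step_card_less by blast
  next
    case (trancl_into_trancl u v w)
    then show ?case using bruhat_step_card_less[of v w] by auto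
  qed
  then show ?thesis by blast
qed

lemma N_gamma_subset_N_set: "N_gamma \<Phi> \<Delta> \<gamma> u \<subseteq> N_set \<Phi> \<Delta> u"
  unfolding N_gamma_def N_set_def h_gamma_def neg_roots_def by auto

lemma N_gamma_eq_N_set_Diff:
  assumes "v \<in> weyl_group \<Phi>" and "inv v \<beta> = - \<gamma>"
  shows "N_gamma \<Phi> \<Delta> \<gamma> v = N_set \<Phi> \<Delta> v - {\<beta>}"
proof -
  have "inj (inv v)"
    using bij_imp_bij_inv[OF bij_weyl[OF assms(1)]] bij_is_inj by blast
  then have only_\<beta>: "b = \<beta>" if "inv v b = - \<gamma>" for b
    using assms(2) that by (metis injD)
  show ?thesis
    using assms(2) unfolding N_gamma_def N_set_def h_gamma_def neg_roots_def
    by (auto dest: only_\<beta>)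
qed

lemma bruhat_step_if_ell_gamma_eq:
  assumes w: "w \<in> weyl_group \<Phi>" and v: "v \<in> weyl_group \<Phi>" and "bruhat_less \<Phi> \<Delta> w v"
    and "\<beta> \<in> N_set \<Phi> \<Delta> v" and "inv v \<beta> = - \<gamma>"
    and "ell_gamma \<Phi> \<Delta> \<gamma> w = ell_gamma \<Phi> \<Delta> \<gamma> v"
  obtains \<alpha> where "\<alpha> \<in> pos_roots \<Phi> \<Delta>" and "v = refl \<alpha> \<circ> w" and "refl \<alpha> \<beta> = - w \<gamma>"
proof -
  have "card (N_set \<Phi> \<Delta> v) = ell_gamma \<Phi> \<Delta> \<gamma> v + 1"
    using assms(4) finite_N_set unfolding ell_gamma_def N_gamma_eq_N_set_Diff[OF v assms(5)]
    by (metis card_Suc_Diff1 Suc_eq_plus1)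
  moreover have "ell_gamma \<Phi> \<Delta> \<gamma> w \<le> card (N_set \<Phi> \<Delta> w)"
    unfolding ell_gamma_def by (rule card_mono[OF finite_N_set N_gamma_subset_N_set])
  ultimately have "bruhat_step \<Phi> \<Delta> w v"
    using bruhat_less_step_or_card_gap[OF assms(3)] assms(6) by linarith
  then obtain \<alpha> where \<alpha>: "\<alpha> \<in> pos_roots \<Phi> \<Delta>" and v_eq: "v = refl \<alpha> \<circ> w"
    unfolding bruhat_step_def by blast
  have "inv w (refl \<alpha> \<beta>) = - \<gamma>"
    using assms(5) inv_refl_comp[OF pos_root_is_root[OF \<alpha>] w] by (simp add: v_eq)
  then have "refl \<alpha> \<beta> = w (- \<gamma>)"
    using bij_weyl[OF w] by (metis bij_inv_eq_iff)
  also have "\<dots> = - w \<gamma>"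
    using weyl_group_elem[OF w] by (simp add: linear_neg)
  finally show ?thesis using that \<alpha> v_eq by blast
qed

lemma pos_root_eq_if_refl_eq:
  assumes \<alpha>1: "\<alpha>1 \<in> pos_roots \<Phi> \<Delta>" and \<alpha>2: "\<alpha>2 \<in> pos_roots \<Phi> \<Delta>"
    and eq: "refl \<alpha>1 x = refl \<alpha>2 x" and moved: "refl \<alpha>1 x \<noteq> x"
  shows "\<alpha>1 = \<alpha>2"
proof -
  define k1 where "k1 = (2 * (x \<bullet> \<alpha>1)) / (\<alpha>1 \<bullet> \<alpha>1)"
  define k2 where "k2 = (2 * (x \<bullet> \<alpha>2)) / (\<alpha>2 \<bullet> \<alpha>2)"
  have refl_x: "refl \<alpha>1 x = x - k1 *\<^sub>R \<alpha>1" "refl \<alpha>2 x = x - k2 *\<^sub>R \<alpha>2"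
    unfolding refl_def k1_def k2_def by simp_all
  then have parallel: "k1 *\<^sub>R \<alpha>1 = k2 *\<^sub>R \<alpha>2" and "k1 \<noteq> 0"
    using eq moved by auto
  have \<alpha>1_eq: "\<alpha>1 = (k2 / k1) *\<^sub>R \<alpha>2"
  proof -
    have "\<alpha>1 = inverse k1 *\<^sub>R (k1 *\<^sub>R \<alpha>1)" using \<open>k1 \<noteq> 0\<close> by simp
    also have "\<dots> = (k2 / k1) *\<^sub>R \<alpha>2" unfolding parallel by (simp add: divide_inverse_commute)
    finally show ?thesis .
  qed
  then have "k2 / k1 = 1 \<or> k2 / k1 = -1"
    using root_multiple[of \<alpha>2 "k2 / k1"] pos_root_is_root[OF \<alpha>1] pos_root_is_root[OF \<alpha>2]
    by metis
  moreover have "k2 / k1 \<noteq> -1"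
  proof
    assume "k2 / k1 = -1"
    then have "- \<alpha>1 = \<alpha>2" using \<alpha>1_eq by simp
    then show False using \<alpha>1 \<alpha>2 pos_neg_roots_disjoint neg_roots_iff by blast
  qed
  ultimately show ?thesis using \<alpha>1_eq by simp
qed

end

theorem corollary3p2:
  fixes \<Phi> \<Delta> :: "'a::euclidean_space set" and \<gamma> \<beta> :: 'a and w :: "'a \<Rightarrow> 'a"
  assumes "root_system \<Phi>" and "irreducible_rs \<Phi>" and "is_base \<Phi> \<Delta>"
    and "highest_root \<Phi> \<Delta> \<gamma>"
    and "w \<in> weyl_group \<Phi>" and "\<beta> \<in> pos_roots \<Phi> \<Delta>"
  shows "\<forall>v1 v2.
     (v1 \<in> weyl_group \<Phi> \<and> bruhat_less \<Phi> \<Delta> w v1 \<and>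
      \<beta> \<in> N_gamma \<Phi> \<Delta> \<gamma> w \<inter> N_set \<Phi> \<Delta> v1 \<and>
      ell_gamma \<Phi> \<Delta> \<gamma> w = ell_gamma \<Phi> \<Delta> \<gamma> v1 \<and> inv v1 \<beta> = - \<gamma>) \<and>
     (v2 \<in> weyl_group \<Phi> \<and> bruhat_less \<Phi> \<Delta> w v2 \<and>
      \<beta> \<in> N_gamma \<Phi> \<Delta> \<gamma> w \<inter> N_set \<Phi> \<Delta> v2 \<and>
      ell_gamma \<Phi> \<Delta> \<gamma> w = ell_gamma \<Phi> \<Delta> \<gamma> v2 \<and> inv v2 \<beta> = - \<gamma>)
     \<longrightarrow> v1 = v2"
proof (intro allI impI)
  fix v1 v2
  assume H: "(v1 \<in> weyl_group \<Phi> \<and> bruhat_less \<Phi> \<Delta> w v1 \<and>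
      \<beta> \<in> N_gamma \<Phi> \<Delta> \<gamma> w \<inter> N_set \<Phi> \<Delta> v1 \<and>
      ell_gamma \<Phi> \<Delta> \<gamma> w = ell_gamma \<Phi> \<Delta> \<gamma> v1 \<and> inv v1 \<beta> = - \<gamma>) \<and>
     (v2 \<in> weyl_group \<Phi> \<and> bruhat_less \<Phi> \<Delta> w v2 \<and>
      \<beta> \<in> N_gamma \<Phi> \<Delta> \<gamma> w \<inter> N_set \<Phi> \<Delta> v2 \<and>
      ell_gamma \<Phi> \<Delta> \<gamma> w = ell_gamma \<Phi> \<Delta> \<gamma> v2 \<and> inv v2 \<beta> = - \<gamma>)"
  interpret based_root_system \<Phi> \<Delta>
    using assms(1,3) by unfold_locales
  obtain \<alpha>1 where \<alpha>1: "\<alpha>1 \<in> pos_roots \<Phi> \<Delta>" "v1 = refl \<alpha>1 \<circ> w" "refl \<alpha>1 \<beta> = - w \<gamma>"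
    using bruhat_step_if_ell_gamma_eq[OF assms(5)] H by blast
  obtain \<alpha>2 where \<alpha>2: "\<alpha>2 \<in> pos_roots \<Phi> \<Delta>" "v2 = refl \<alpha>2 \<circ> w" "refl \<alpha>2 \<beta> = - w \<gamma>"
    using bruhat_step_if_ell_gamma_eq[OF assms(5)] H by blast
  have "inv w \<beta> \<noteq> - \<gamma>"
    using H unfolding N_gamma_def h_gamma_def by auto
  then have "- w \<gamma> \<noteq> \<beta>"
    using weyl_group_elem[OF assms(5)] by (metis bij_is_inj inv_f_f linear_neg)
  then have "\<alpha>1 = \<alpha>2"
    using pos_root_eq_if_refl_eq[OF \<alpha>1(1) \<alpha>2(1), of \<beta>] \<alpha>1(3) \<alpha>2(3) by metis
  then show "v1 = v2" using \<alpha>1(2) \<alpha>2(2) by simp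
qed

end
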